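(* Let $|\psi\rangle$ be a pure three-qubit state. Suppose that the inequality $\mathcal C_{ik}^2+\mathcal C_{jk}^2\ge\frac89$ holds for at least two of the three choices of $\{i,j,k\}=\{A,B,C\}$ (i.e. for at least two choices of the index $k$). Then steering correlations obey monogamy: at most one of $S_{AB},S_{AC},S_{BC}$ exceeds $1$.
   Context: For a two-qubit state $\rho$ let $t_{kl}=\mathrm{Tr}[\rho\,\sigma_k\otimes\sigma_l]$ ($\sigma_k$ Pauli matrices) and $S(\rho)=\sum_{k,l=1}^3 t_{kl}^2$; $\rho_{ij}$ is the reduced state of qubits $i,j$ and $S_{ij}=S(\rho_{ij})$. $S_{ij}>1$ is equivalent to $\rho_{ij}$ violating the three-settings CJWR linear steering inequality. $\mathcal C_{ij}$ is the Wootters concurrence of $\rho_{ij}$: $\mathcal C(\rho)=\max\{0,\lambda_1-\lambda_2-\lambda_3-\lambda_4\}$, with $\lambda_1\ge\dots\ge\lambda_4$ the square roots of the eigenvalues of $\rho(\sigma_2\otimes\sigma_2)\rho^*(\sigma_2\otimes\sigma_2)$. Monogamy of steering means that at most one of the three reduced states violates the inequality. *)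

theory Defs
  imports "Jordan_Normal_Form.Char_Poly" "HOL-Computational_Algebra.Polynomial"
begin

(* Three-qubit pure state: vector psi of dimension 8, basis index 4*a + 2*b + c
   for qubits A (bit a), B (bit b), C (bit c). *)

definition pure3 :: "complex vec \<Rightarrow> bool" where
  "pure3 psi \<longleftrightarrow> dim_vec psi = 8 \<and> (\<Sum>i<8. (cmod (psi $ i))^2) = 1"

(* reduced two-qubit density matrices, basis index 2*x + y *)
definition rho_AB :: "complex vec \<Rightarrow> complex mat" where
  "rho_AB psi = mat 4 4 (\<lambda>(i,j). \<Sum>c<2. psi $ (2*i + c) * cnj (psi $ (2*j + c)))"

definition rho_AC :: "complex vec \<Rightarrow> complex mat" where
  "rho_AC psi = mat 4 4 (\<lambda>(i,j). \<Sum>b<2.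
      psi $ (4*(i div 2) + 2*b + i mod 2) * cnj (psi $ (4*(j div 2) + 2*b + j mod 2)))"

definition rho_BC :: "complex vec \<Rightarrow> complex mat" where
  "rho_BC psi = mat 4 4 (\<lambda>(i,j). \<Sum>a<2. psi $ (4*a + i) * cnj (psi $ (4*a + j)))"

definition pauli :: "nat \<Rightarrow> complex mat" where
  "pauli k = (if k = 1 then mat_of_rows_list 2 [[0, 1], [1, 0]]
              else if k = 2 then mat_of_rows_list 2 [[0, -\<i>], [\<i>, 0]]
              else mat_of_rows_list 2 [[1, 0], [0, -1]])"

definition kron2 :: "complex mat \<Rightarrow> complex mat \<Rightarrow> complex mat" where
  "kron2 A B = mat 4 4 (\<lambda>(i,j). A $$ (i div 2, j div 2) * B $$ (i mod 2, j mod 2))"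

(* t_kl = Tr[rho sigma_k (x) sigma_l]; real for Hermitian rho, Re taken to land in reals *)
definition tcorr :: "complex mat \<Rightarrow> nat \<Rightarrow> nat \<Rightarrow> real" where
  "tcorr rho k l = Re (\<Sum>i<4. (rho * kron2 (pauli k) (pauli l)) $$ (i, i))"

definition Ssteer :: "complex mat \<Rightarrow> real" where
  "Ssteer rho = (\<Sum>k\<in>{1..3}. \<Sum>l\<in>{1..3}. (tcorr rho k l)^2)"

(* Wootters concurrence. R = rho (sy(x)sy) rho^* (sy(x)sy) has real nonnegative eigenvalues;
   mu is the list of them (with multiplicity) in non-increasing order, lambda_i = sqrt mu_i. *)
definition wootters_R :: "complex mat \<Rightarrow> complex mat" where
  "wootters_R rho = (let Y = kron2 (pauli 2) (pauli 2) in rho * Y * map_mat cnj rho * Y)"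

definition wootters_eigs :: "complex mat \<Rightarrow> real list" where
  "wootters_eigs rho = (SOME mu. length mu = 4 \<and> sorted_wrt (\<ge>) mu \<and>
      char_poly (wootters_R rho) = (\<Prod>x\<leftarrow>mu. [:- complex_of_real x, 1:]))"

definition concurrence :: "complex mat \<Rightarrow> real" where
  "concurrence rho = (let lam = map sqrt (wootters_eigs rho) in
      max 0 (lam!0 - lam!1 - lam!2 - lam!3))"

end

theory Submission
  imports Defs "Berlekamp_Zassenhaus.Mahler_Measure"
begin

(* The two-qubit reductions of a pure three-qubit state have rank two, rho = |a><a| + |b><b|,
   and the Wootters matrix of such a state factors through the 2x2 matrix W of the spin-flip
   form on span {a, b}; hence C^2 = |W|_F^2 - 2 |det W|.  Completeness of the Pauli basis
   writes S(rho_AB) through the determinants d_A, d_B, d_C of the one-qubit reductions, and the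
   Coffman-Kundu-Wootters equalities 4 d_A = C_AB^2 + C_AC^2 + tau (tau the three-tangle) turn
   this into S_AB = 1 + 2 C_AB^2 - C_AC^2 - C_BC^2.  Since W is dominated by the Gram matrix of
   a and b, C_BC^2 is at most the square of the top eigenvalue of rho_A, which bounds
   C_AB^2 + C_AC^2 + C_BC^2 by 4/3.  With two pair sums at least 8/9, no two of the S_ij can
   exceed 1. *)

section \<open>Matrices and characteristic polynomials\<close>

lemma char_poly_matrix_mult:
  fixes A B :: "'a::idom mat"
  assumes A: "A \<in> carrier_mat n n" and B: "B \<in> carrier_mat n n"
  shows "char_poly_matrix (A * B)
    = [:0,1:] \<cdot>\<^sub>m 1\<^sub>m n - map_mat (\<lambda>a. [:a:]) A * map_mat (\<lambda>a. [:a:]) B"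
proof -
  have "char_poly_matrix (A * B) = [:0,1:] \<cdot>\<^sub>m 1\<^sub>m n + map_mat (\<lambda>a. [:-a:]) (A * B)"
    unfolding char_poly_matrix_def using A B by simp
  also have "map_mat (\<lambda>a. [:-a:]) (A * B) = - map_mat (\<lambda>a. [:a:]) (A * B)"
    by (rule eq_matI) auto
  also have "map_mat (\<lambda>a. [:a:]) (A * B) = map_mat (\<lambda>a. [:a:]) A * map_mat (\<lambda>a. [:a:]) B"
    by (rule semiring_hom.mat_hom_mult[OF coeff_lift_hom.semiring_hom_axioms A B])
  finally show ?thesis
    using A B minus_add_uminus_mat[of "[:0,1:] \<cdot>\<^sub>m 1\<^sub>m n" n n
        "map_mat (\<lambda>a. [:a:]) A * map_mat (\<lambda>a. [:a:]) B"]
    by simp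
qed

lemma det_four_block_mat_swap:
  fixes A B C D :: "'a::comm_ring_1 mat"
  assumes A: "A \<in> carrier_mat n n" and B: "B \<in> carrier_mat n n"
    and C: "C \<in> carrier_mat n n" and D: "D \<in> carrier_mat n n"
  shows "det (four_block_mat D C B A) = det (four_block_mat A B C D)"
proof -
  let ?I = "1\<^sub>m n :: 'a mat" and ?O = "0\<^sub>m n n :: 'a mat"
  let ?J = "four_block_mat ?O ?I ?I ?O" and ?M = "four_block_mat A B C D"
  have I: "?I \<in> carrier_mat n n" and O: "?O \<in> carrier_mat n n" by auto
  have J: "?J \<in> carrier_mat (n+n) (n+n)" and M: "?M \<in> carrier_mat (n+n) (n+n)"
    using A B C D by auto
  have "?J * ?M = four_block_mat C D A B"
    by (subst mult_four_block_mat[OF O I I O A B C D]) (use A B C D in simp)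
  also have "\<dots> * ?J = four_block_mat D C B A"
    by (subst mult_four_block_mat[OF C D A B O I I O]) (use A B C D in simp)
  finally have "det (four_block_mat D C B A) = det (?J * ?M * ?J)"
    by simp
  also have "\<dots> = det ?J * det ?M * det ?J"
    unfolding det_mult[OF mult_carrier_mat[OF J M] J] det_mult[OF J M] ..
  also have "\<dots> = det (?J * ?J) * det ?M"
    by (simp add: det_mult[OF J J])
  also have "?J * ?J = 1\<^sub>m (n+n)"
    by (subst mult_four_block_mat[OF O I I O O I I O]) simp
  finally show ?thesis by simp
qed

lemma char_poly_mult_commute:
  fixes P Q :: "'a::idom mat"
  assumes P: "P \<in> carrier_mat n n" and Q: "Q \<in> carrier_mat n n"
  shows "char_poly (P * Q) = char_poly (Q * P)"
proof -
  let ?P = "map_mat (\<lambda>a. [:a:]) P" and ?Q = "map_mat (\<lambda>a. [:a:]) Q"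
  let ?X = "([:0,1:] :: 'a poly) \<cdot>\<^sub>m 1\<^sub>m n" and ?I = "1\<^sub>m n :: 'a poly mat"
  have cP: "?P \<in> carrier_mat n n" and cQ: "?Q \<in> carrier_mat n n"
    and cX: "?X \<in> carrier_mat n n" and cI: "?I \<in> carrier_mat n n"
    using P Q by auto
  have "?P * ?X = [:0,1:] \<cdot>\<^sub>m (?P * ?I)"
    by (rule mult_smult_distrib[OF cP cI])
  also have "\<dots> = [:0,1:] \<cdot>\<^sub>m (?I * ?P)"
    using cP by simp
  also have "\<dots> = ?X * ?P"
    by (rule mult_smult_assoc_mat[symmetric, OF cI cP])
  finally have comm: "?P * ?X = ?X * ?P" .
  text \<open>det [[xI, P], [Q, I]] is the first characteristic polynomial directly and, after
    swapping the blocks, the second.\<close>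
  have "char_poly (P * Q) = det (four_block_mat ?X ?P ?Q ?I)"
    unfolding char_poly_def char_poly_matrix_mult[OF P Q] using cX cQ
    by (subst det_four_block_mat[OF cX cP cQ cI]) simp_all
  also have "\<dots> = det (four_block_mat ?I ?Q ?P ?X)"
    by (rule det_four_block_mat_swap[symmetric, OF cX cP cQ cI])
  also have "\<dots> = char_poly (Q * P)"
    unfolding char_poly_def char_poly_matrix_mult[OF Q P] using cX cP
    by (subst det_four_block_mat[OF cI cQ cP cX comm]) simp
  finally show ?thesis .
qed

lemma det_1x1:
  assumes "A \<in> carrier_mat 1 1"
  shows "det A = A $$ (0,0)"
proof -
  have "det A = (\<Sum>i<1. A $$ (i,0) * cofactor A i 0)"
    by (rule laplace_expansion_column[OF assms]) simp
  also have "det (mat_delete A 0 0) = 1"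
    by (rule det_dim_zero) (use mat_delete_carrier[OF assms] in simp)
  ultimately show ?thesis by (simp add: cofactor_def)
qed

lemma det_2x2:
  assumes A: "A \<in> carrier_mat 2 2"
  shows "det A = A $$ (0,0) * A $$ (1,1) - A $$ (0,1) * A $$ (1,0)"
proof -
  have minor: "mat_delete A i 0 \<in> carrier_mat 1 1" for i
    using mat_delete_carrier[OF A] by simp
  have "det A = (\<Sum>i<2. A $$ (i,0) * cofactor A i 0)"
    by (rule laplace_expansion_column[OF A]) simp
  also have "\<dots> = A $$ (0,0) * det (mat_delete A 0 0) - A $$ (1,0) * det (mat_delete A 1 0)"
    by (simp add: cofactor_def eval_nat_numeral)
  also have "det (mat_delete A 0 0) = A $$ (1,1)"
    by (subst det_1x1[OF minor]) (use A in \<open>simp add: mat_delete_def\<close>)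
  also have "det (mat_delete A 1 0) = A $$ (0,1)"
    by (subst det_1x1[OF minor]) (use A in \<open>simp add: mat_delete_def\<close>)
  finally show ?thesis by (simp add: algebra_simps)
qed

lemma char_poly_2x2:
  assumes "A \<in> carrier_mat 2 2"
  shows "char_poly A
    = [: A $$ (0,0) * A $$ (1,1) - A $$ (0,1) * A $$ (1,0), - (A $$ (0,0) + A $$ (1,1)), 1 :]"
  using assms unfolding char_poly_def
  by (subst det_2x2) (simp_all add: char_poly_matrix_def)

lemma char_poly_four_block_zeros:
  fixes A :: "'a::idom mat"
  assumes A: "A \<in> carrier_mat 2 2"
  shows "char_poly (four_block_mat A (0\<^sub>m 2 2) (0\<^sub>m 2 2) (0\<^sub>m 2 2)) = char_poly A * [:0,0,1:]"
proof -
  have "char_poly_matrix (four_block_mat A (0\<^sub>m 2 2) (0\<^sub>m 2 2) (0\<^sub>m 2 2))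
     = four_block_mat (char_poly_matrix A) (0\<^sub>m 2 2) (0\<^sub>m 2 2) ([:0,1:] \<cdot>\<^sub>m 1\<^sub>m 2)"
    by (rule eq_matI) (use A in \<open>auto simp: char_poly_matrix_def four_block_mat_def\<close>)
  moreover have "det (four_block_mat (char_poly_matrix A) (0\<^sub>m 2 2) (0\<^sub>m 2 2) ([:0,1:] \<cdot>\<^sub>m 1\<^sub>m 2))
     = det (char_poly_matrix A) * det ([:0,1:] \<cdot>\<^sub>m (1\<^sub>m 2 :: 'a poly mat))"
    by (rule det_four_block_mat_lower_left_zero) (use A in auto)
  moreover have "det ([:0,1:] \<cdot>\<^sub>m (1\<^sub>m 2 :: 'a poly mat)) = [:0,0,1:]"
    by (simp add: power2_eq_square)
  ultimately show ?thesis unfolding char_poly_def by simp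
qed

lemma sorted_desc_eqI:
  fixes xs ys :: "'a::linorder list"
  assumes "mset xs = mset ys" "sorted_wrt (\<ge>) xs" "sorted_wrt (\<ge>) ys"
  shows "xs = ys"
proof -
  have "sort (rev ys) = rev xs" "sort (rev ys) = rev ys"
    using assms by (auto intro!: properties_for_sort simp: sorted_wrt_rev)
  thus ?thesis by simp
qed

lemma less_2_cases: "(i::nat) < 2 \<longleftrightarrow> i = 0 \<or> i = 1"
  by auto

lemma less_4_cases: "(i::nat) < 4 \<longleftrightarrow> i = 0 \<or> i = 1 \<or> i = 2 \<or> i = 3"
  by auto

lemma sum_lessThan_2: "(\<Sum>i<(2::nat). f i) = f 0 + (f 1 :: 'a::comm_monoid_add)"
  by (simp add: eval_nat_numeral)

lemma sum_lessThan_4: "(\<Sum>i<(4::nat). f i) = f 0 + f 1 + f 2 + (f 3 :: 'a::comm_monoid_add)"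
  by (simp add: eval_nat_numeral add.commute add.left_commute)

lemma sum_lessThan_8:
  "(\<Sum>i<(8::nat). f i) = f 0 + f 1 + f 2 + f 3 + f 4 + f 5 + f 6 + (f 7 :: 'a::comm_monoid_add)"
  by (simp add: eval_nat_numeral add.commute add.left_commute)

lemma sum_1_3: "(\<Sum>i\<in>{1..(3::nat)}. f i) = f 1 + f 2 + (f 3 :: 'a::comm_monoid_add)"
  by (simp add: eval_nat_numeral atLeastAtMostSuc_conv add.commute add.left_commute)

lemma of_real_cmod_power2: "(complex_of_real (cmod z))^2 = z * cnj z"
  using complex_norm_square[of z] by simp

lemma cmod_power2_Re_Im: "(cmod z)^2 = (Re z)^2 + (Im z)^2"
  by (simp add: cmod_def)

section \<open>Concurrence of rank-two states\<close>

text \<open>The symmetric bilinear form a^T (sigma_y \<otimes> sigma_y) b of the spin flip.\<close>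

definition flip_form :: "(nat \<Rightarrow> complex) \<Rightarrow> (nat \<Rightarrow> complex) \<Rightarrow> complex" where
  "flip_form a b = - a 0 * b 3 + a 1 * b 2 + a 2 * b 1 - a 3 * b 0"

definition flip_mat :: "(nat \<Rightarrow> complex) \<Rightarrow> (nat \<Rightarrow> complex) \<Rightarrow> complex mat" where
  "flip_mat a b = mat 2 2 (\<lambda>(i,j). flip_form (if i = 0 then a else b) (if j = 0 then a else b))"

definition flip_frob :: "(nat \<Rightarrow> complex) \<Rightarrow> (nat \<Rightarrow> complex) \<Rightarrow> real" where
  "flip_frob a b = (cmod (flip_form a a))^2 + 2 * (cmod (flip_form a b))^2 + (cmod (flip_form b b))^2"

definition flip_det :: "(nat \<Rightarrow> complex) \<Rightarrow> (nat \<Rightarrow> complex) \<Rightarrow> real" where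
  "flip_det a b = cmod (flip_form a a * flip_form b b - (flip_form a b)^2)"

definition rank2_state :: "(nat \<Rightarrow> complex) \<Rightarrow> (nat \<Rightarrow> complex) \<Rightarrow> complex mat" where
  "rank2_state a b = mat 4 4 (\<lambda>(i,j). a i * cnj (a j) + b i * cnj (b j))"

definition frame_mat :: "(nat \<Rightarrow> complex) \<Rightarrow> (nat \<Rightarrow> complex) \<Rightarrow> complex mat" where
  "frame_mat a b = mat 4 4 (\<lambda>(i,j). if j = 0 then a i else if j = 1 then b i else 0)"

lemma flip_form_commute: "flip_form b a = flip_form a b"
  by (simp add: flip_form_def algebra_simps)

lemma spin_flip_mat:
  "kron2 (pauli 2) (pauli 2) = mat 4 4 (\<lambda>(i,j). if i + j = 3 then (if i = 0 \<or> i = 3 then -1 else 1) else 0)"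
  by (rule eq_matI) (auto simp: kron2_def pauli_def mat_of_rows_list_def less_4_cases)

lemma rank2_state_frame:
  "rank2_state a b = frame_mat a b * map_mat cnj (transpose_mat (frame_mat a b))"
  by (rule eq_matI)
    (auto simp: rank2_state_def frame_mat_def scalar_prod_def sum_lessThan_4 atLeast0LessThan)

lemma cnj_rank2_state_frame:
  "map_mat cnj (rank2_state a b) = map_mat cnj (frame_mat a b) * transpose_mat (frame_mat a b)"
  by (rule eq_matI)
    (auto simp: rank2_state_def frame_mat_def scalar_prod_def sum_lessThan_4 atLeast0LessThan)

lemma frame_flip_frame:
  "transpose_mat (frame_mat a b) * kron2 (pauli 2) (pauli 2) * frame_mat a b
     = four_block_mat (flip_mat a b) (0\<^sub>m 2 2) (0\<^sub>m 2 2) (0\<^sub>m 2 2)"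
  by (rule eq_matI) (auto simp: spin_flip_mat frame_mat_def flip_mat_def flip_form_def
      four_block_mat_def scalar_prod_def sum_lessThan_4 atLeast0LessThan less_4_cases algebra_simps)

lemma cnj_frame_flip_frame:
  "map_mat cnj (transpose_mat (frame_mat a b)) * kron2 (pauli 2) (pauli 2) * map_mat cnj (frame_mat a b)
     = four_block_mat (map_mat cnj (flip_mat a b)) (0\<^sub>m 2 2) (0\<^sub>m 2 2) (0\<^sub>m 2 2)"
  by (rule eq_matI) (auto simp: spin_flip_mat frame_mat_def flip_mat_def flip_form_def
      four_block_mat_def scalar_prod_def sum_lessThan_4 atLeast0LessThan less_4_cases algebra_simps)

text \<open>Writing rho = F F^* with F = frame_mat a b, the Wootters matrix rho Y rho^* Y is
  F (F^* Y conj F F^T Y), which has the characteristic polynomial of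
  (F^* Y conj F) (F^T Y F) = conj W W padded by zeros, where W = flip_mat a b.\<close>

lemma char_poly_wootters_R_rank2_state:
  "char_poly (wootters_R (rank2_state a b))
     = [:0, 0, complex_of_real ((flip_det a b)^2), - complex_of_real (flip_frob a b), 1:]"
proof -
  let ?F = "frame_mat a b" and ?Y = "kron2 (pauli 2) (pauli 2)" and ?W = "flip_mat a b"
  let ?Fa = "map_mat cnj (transpose_mat ?F)" and ?Fc = "map_mat cnj ?F" and ?Ft = "transpose_mat ?F"
  have c4: "?F \<in> carrier_mat 4 4" "?Y \<in> carrier_mat 4 4" "?Fa \<in> carrier_mat 4 4"
    "?Fc \<in> carrier_mat 4 4" "?Ft \<in> carrier_mat 4 4"
    by (simp_all add: frame_mat_def kron2_def)
  have c2: "?W \<in> carrier_mat 2 2" "map_mat cnj ?W \<in> carrier_mat 2 2" "0\<^sub>m 2 2 \<in> carrier_mat 2 2"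
    by (simp_all add: flip_mat_def)
  have "wootters_R (rank2_state a b) = ?F * (?Fa * ?Y * ?Fc * ?Ft * ?Y)"
    unfolding wootters_R_def Let_def cnj_rank2_state_frame
    unfolding rank2_state_frame using c4 by (simp add: assoc_mult_mat[of _ 4 4 _ 4 _ 4])
  hence "char_poly (wootters_R (rank2_state a b)) = char_poly ((?Fa * ?Y * ?Fc) * (?Ft * ?Y * ?F))"
    using c4 by (simp add: char_poly_mult_commute[of ?F 4] assoc_mult_mat[of _ 4 4 _ 4 _ 4])
  also have "\<dots> = char_poly (four_block_mat (map_mat cnj ?W * ?W) (0\<^sub>m 2 2) (0\<^sub>m 2 2) (0\<^sub>m 2 2))"
    unfolding frame_flip_frame cnj_frame_flip_frame
    by (subst mult_four_block_mat[OF c2(2,3,3,3,1,3,3,3)]) (use c2 in simp)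
  also have "\<dots> = char_poly (map_mat cnj ?W * ?W) * [:0,0,1:]"
    using c2 by (simp add: char_poly_four_block_zeros)
  also have "char_poly (map_mat cnj ?W * ?W)
      = [: complex_of_real ((flip_det a b)^2), - complex_of_real (flip_frob a b), 1 :]"
    unfolding char_poly_2x2[OF mult_carrier_mat[OF c2(2,1)]]
    by (simp add: flip_mat_def flip_det_def flip_frob_def scalar_prod_def of_real_cmod_power2
        sum_lessThan_2 atLeast0LessThan flip_form_commute[of b a]; Groebner_Basis.algebra)
  finally show ?thesis by simp
qed

lemma flip_det_le_flip_frob: "2 * flip_det a b \<le> flip_frob a b"
proof -
  let ?x = "cmod (flip_form a a)" and ?y = "cmod (flip_form a b)" and ?z = "cmod (flip_form b b)"
  have "flip_det a b \<le> ?x * ?z + ?y^2"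
    unfolding flip_det_def
    using norm_triangle_ineq4[of "flip_form a a * flip_form b b" "(flip_form a b)^2"]
    by (simp add: norm_mult norm_power)
  moreover have "2 * (?x * ?z) \<le> ?x^2 + ?z^2"
    using sum_squares_bound[of ?x ?z] by simp
  ultimately show ?thesis unfolding flip_frob_def by linarith
qed

lemma wootters_eigs_eqI:
  assumes "length mu = 4" "sorted_wrt (\<ge>) mu"
    and "char_poly (wootters_R rho) = (\<Prod>x\<leftarrow>mu. [:- complex_of_real x, 1:])"
  shows "wootters_eigs rho = mu"
proof -
  let ?mu = "wootters_eigs rho"
  have spec: "length ?mu = 4 \<and> sorted_wrt (\<ge>) ?mu
      \<and> char_poly (wootters_R rho) = (\<Prod>x\<leftarrow>?mu. [:- complex_of_real x, 1:])"
    unfolding wootters_eigs_def by (rule someI[of _ mu]) (use assms in blast)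
  moreover have "mset (map complex_of_real xs) = mset (map complex_of_real ys) \<Longrightarrow> mset xs = mset ys"
    for xs ys :: "real list"
    by (metis inj_eq inj_of_real multiset.inj_map mset_map)
  ultimately have "mset ?mu = mset mu"
    using reconstruct_poly_monic_defines_mset[of "map complex_of_real ?mu" "map complex_of_real mu"]
      assms(3)
    by (simp add: comp_def)
  thus ?thesis using sorted_desc_eqI assms(2) spec by blast
qed

lemma concurrence_rank2_state:
  "(concurrence (rank2_state a b))^2 = flip_frob a b - 2 * flip_det a b"
proof -
  let ?t = "flip_frob a b" and ?d = "flip_det a b"
  define s where "s = sqrt (?t^2 - 4 * ?d^2)"
  define r1 r2 where "r1 = (?t + s) / 2" and "r2 = (?t - s) / 2"
  have d0: "?d \<ge> 0" by (simp add: flip_det_def)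
  have td: "2 * ?d \<le> ?t" by (rule flip_det_le_flip_frob)
  have "(2 * ?d)^2 \<le> ?t^2" using td d0 by (intro power_mono) auto
  hence s2: "s^2 = ?t^2 - 4 * ?d^2" and s0: "s \<ge> 0" unfolding s_def by auto
  have "s^2 \<le> ?t^2" using s2 by simp
  hence "s \<le> ?t" using s0 td d0 by simp
  hence sorted: "sorted_wrt (\<ge>) [r1, r2, 0, 0]"
    using s0 unfolding r1_def r2_def by auto
  have r12: "r1 * r2 = ?d^2" and r1r2: "r1 + r2 = ?t"
    unfolding r1_def r2_def using s2 by (simp_all add: field_simps power2_eq_square)
  have "char_poly (wootters_R (rank2_state a b)) = (\<Prod>x\<leftarrow>[r1, r2, 0, 0]. [:- complex_of_real x, 1:])"
    unfolding char_poly_wootters_R_rank2_state r12[symmetric] r1r2[symmetric] by (simp add: algebra_simps)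
  hence eigs: "wootters_eigs (rank2_state a b) = [r1, r2, 0, 0]"
    using sorted by (intro wootters_eigs_eqI) auto
  have "r2 \<ge> 0" "r2 \<le> r1" using sorted by auto
  hence "concurrence (rank2_state a b) = sqrt r1 - sqrt r2"
    unfolding concurrence_def Let_def eigs by simp
  also have "(sqrt r1 - sqrt r2)^2 = r1 + r2 - 2 * sqrt (r1 * r2)"
    using \<open>r2 \<ge> 0\<close> \<open>r2 \<le> r1\<close> by (simp add: power2_diff real_sqrt_mult)
  finally show ?thesis using r12 r1r2 d0 by simp
qed

section \<open>The concurrence is bounded by the top Gram eigenvalue\<close>

definition vnorm2 :: "(nat \<Rightarrow> complex) \<Rightarrow> real" where
  "vnorm2 a = (\<Sum>i<4. (cmod (a i))^2)"

definition vinner :: "(nat \<Rightarrow> complex) \<Rightarrow> (nat \<Rightarrow> complex) \<Rightarrow> complex" where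
  "vinner a b = (\<Sum>i<4. cnj (a i) * b i)"

definition gram_det :: "(nat \<Rightarrow> complex) \<Rightarrow> (nat \<Rightarrow> complex) \<Rightarrow> real" where
  "gram_det a b = vnorm2 a * vnorm2 b - (cmod (vinner a b))^2"

text \<open>The larger eigenvalue of the Gram matrix of a and b.\<close>

definition gram_eig_max :: "(nat \<Rightarrow> complex) \<Rightarrow> (nat \<Rightarrow> complex) \<Rightarrow> real" where
  "gram_eig_max a b
    = (vnorm2 a + vnorm2 b + sqrt ((vnorm2 a - vnorm2 b)^2 + 4 * (cmod (vinner a b))^2)) / 2"

lemma vnorm2_nonneg: "vnorm2 a \<ge> 0"
  unfolding vnorm2_def by (simp add: sum_nonneg)

lemma gram_eig_max_nonneg: "gram_eig_max a b \<ge> 0"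
  unfolding gram_eig_max_def using vnorm2_nonneg[of a] vnorm2_nonneg[of b] by simp

lemma Cauchy_Schwarz_4:
  fixes x0 x1 x2 x3 y0 y1 y2 y3 :: real
  shows "(x0*y0 + x1*y1 + x2*y2 + x3*y3)^2 \<le> (x0^2 + x1^2 + x2^2 + x3^2) * (y0^2 + y1^2 + y2^2 + y3^2)"
proof -
  have "(x0^2 + x1^2 + x2^2 + x3^2) * (y0^2 + y1^2 + y2^2 + y3^2) - (x0*y0 + x1*y1 + x2*y2 + x3*y3)^2
      = (x0*y1 - x1*y0)^2 + (x0*y2 - x2*y0)^2 + (x0*y3 - x3*y0)^2
        + (x1*y2 - x2*y1)^2 + (x1*y3 - x3*y1)^2 + (x2*y3 - x3*y2)^2"
    by Groebner_Basis.algebra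
  thus ?thesis by (smt (verit) zero_le_power2)
qed

lemma flip_form_Cauchy_Schwarz: "(cmod (flip_form a b))^2 \<le> vnorm2 a * vnorm2 b"
proof -
  have "cmod (flip_form a b) \<le> cmod (- a 0 * b 3 + a 1 * b 2 + a 2 * b 1) + cmod (a 3 * b 0)"
    unfolding flip_form_def by (rule norm_triangle_ineq4)
  also have "\<dots> \<le> cmod (a 0) * cmod (b 3) + cmod (a 1) * cmod (b 2) + cmod (a 2) * cmod (b 1)
      + cmod (a 3) * cmod (b 0)"
    using norm_triangle_ineq[of "- a 0 * b 3 + a 1 * b 2" "a 2 * b 1"]
      norm_triangle_ineq[of "- a 0 * b 3" "a 1 * b 2"] by (simp add: norm_mult)
  finally have "(cmod (flip_form a b))^2 \<le> (cmod (a 0) * cmod (b 3) + cmod (a 1) * cmod (b 2)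
      + cmod (a 2) * cmod (b 1) + cmod (a 3) * cmod (b 0))^2"
    by (intro power_mono) simp_all
  also have "\<dots> \<le> vnorm2 a * vnorm2 b"
    unfolding vnorm2_def sum_lessThan_4
    using Cauchy_Schwarz_4[of "cmod (a 0)" "cmod (b 3)" "cmod (a 1)" "cmod (b 2)"
        "cmod (a 2)" "cmod (b 1)" "cmod (a 3)" "cmod (b 0)"]
    by (simp add: ac_simps)
  finally show ?thesis .
qed

lemma flip_form_lincomb:
  "flip_form (\<lambda>i. x0 * a i + x1 * b i) (\<lambda>i. y0 * a i + y1 * b i)
     = x0 * y0 * flip_form a a + (x0 * y1 + x1 * y0) * flip_form a b + x1 * y1 * flip_form b b"
  unfolding flip_form_def by Groebner_Basis.algebra

lemma vnorm2_lincomb: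
  "vnorm2 (\<lambda>i. x0 * a i + x1 * b i)
     = (cmod x0)^2 * vnorm2 a + (cmod x1)^2 * vnorm2 b + 2 * Re (cnj x0 * x1 * vinner a b)"
proof -
  let ?w = "cnj x0 * x1 * vinner a b"
  have "complex_of_real (vnorm2 (\<lambda>i. x0 * a i + x1 * b i))
      = complex_of_real ((cmod x0)^2 * vnorm2 a + (cmod x1)^2 * vnorm2 b) + (?w + cnj ?w)"
    unfolding vnorm2_def vinner_def
    by (simp add: sum_lessThan_4 of_real_cmod_power2; Groebner_Basis.algebra)
  also have "?w + cnj ?w = complex_of_real (2 * Re ?w)"
    by (rule complex_add_cnj)
  finally show ?thesis
    by (simp only: of_real_add[symmetric] of_real_eq_iff)
qed

lemma vnorm2_lincomb_le:
  "vnorm2 (\<lambda>i. x0 * a i + x1 * b i) \<le> gram_eig_max a b * ((cmod x0)^2 + (cmod x1)^2)"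
proof -
  define na nb c where "na = vnorm2 a" and "nb = vnorm2 b" and "c = cmod (vinner a b)"
  define s where "s = sqrt ((na - nb)^2 + 4 * c^2)"
  define p q where "p = cmod x0" and "q = cmod x1"
  have s2: "s^2 = (na - nb)^2 + 4 * c^2"
    unfolding s_def by simp
  have "sqrt ((na - nb)^2) \<le> s"
    unfolding s_def by (rule real_sqrt_le_mono) simp
  hence sabs: "\<bar>na - nb\<bar> \<le> s" by simp
  define \<alpha> \<beta> where "\<alpha> = (nb - na + s) / 2" and "\<beta> = (na - nb + s) / 2"
  have \<alpha>\<beta>: "\<alpha> \<ge> 0" "\<beta> \<ge> 0"
    unfolding \<alpha>_def \<beta>_def using sabs by auto
  text \<open>Weighted AM-GM, with weights whose product is c^2.\<close>
  have "\<alpha> * \<beta> = c^2"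
    unfolding \<alpha>_def \<beta>_def using s2 by (simp add: field_simps power2_eq_square; Groebner_Basis.algebra)
  hence "(\<alpha> * p^2 + \<beta> * q^2)^2 - (2 * p * q * c)^2 = (\<alpha> * p^2 - \<beta> * q^2)^2"
    by Groebner_Basis.algebra
  hence "(2 * p * q * c)^2 \<le> (\<alpha> * p^2 + \<beta> * q^2)^2"
    by (smt (verit) zero_le_power2)
  hence amgm: "2 * p * q * c \<le> \<alpha> * p^2 + \<beta> * q^2"
    by (rule power2_le_imp_le) (use \<alpha>\<beta> in simp)
  have "Re (cnj x0 * x1 * vinner a b) \<le> cmod (cnj x0 * x1 * vinner a b)"
    by (rule complex_Re_le_cmod)
  also have "\<dots> = p * q * c"
    unfolding p_def q_def c_def by (simp add: norm_mult)
  finally have "vnorm2 (\<lambda>i. x0 * a i + x1 * b i) \<le> p^2 * na + q^2 * nb + (\<alpha> * p^2 + \<beta> * q^2)"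
    using amgm unfolding vnorm2_lincomb p_def q_def na_def nb_def by linarith
  also have "\<dots> = gram_eig_max a b * (p^2 + q^2)"
    unfolding gram_eig_max_def \<alpha>_def \<beta>_def s_def na_def nb_def c_def by (simp add: field_simps)
  finally show ?thesis unfolding p_def q_def .
qed

text \<open>The operator norm of flip_mat a b is at most gram_eig_max a b: the flip form pairs
  W y with the combination of a, b whose coefficients are conj (W y), and both combinations
  are controlled by the Rayleigh bound above.\<close>

lemma flip_mat_apply_le:
  "(cmod (flip_form a a * y0 + flip_form a b * y1))^2 + (cmod (flip_form a b * y0 + flip_form b b * y1))^2
     \<le> (gram_eig_max a b)^2 * ((cmod y0)^2 + (cmod y1)^2)"
proof -
  define z0 z1 where "z0 = flip_form a a * y0 + flip_form a b * y1"
    and "z1 = flip_form a b * y0 + flip_form b b * y1"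
  define Z Y m where "Z = (cmod z0)^2 + (cmod z1)^2" and "Y = (cmod y0)^2 + (cmod y1)^2"
    and "m = gram_eig_max a b"
  let ?u = "\<lambda>i. cnj z0 * a i + cnj z1 * b i" and ?v = "\<lambda>i. y0 * a i + y1 * b i"
  have Z0: "Z \<ge> 0" and Y0: "Y \<ge> 0"
    unfolding Z_def Y_def by simp_all
  have "flip_form ?u ?v = complex_of_real Z"
    unfolding flip_form_lincomb Z_def z0_def z1_def
    by (simp add: of_real_cmod_power2 flip_form_commute[of b a]; Groebner_Basis.algebra)
  hence "Z^2 \<le> vnorm2 ?u * vnorm2 ?v"
    using flip_form_Cauchy_Schwarz[of ?u ?v] Z0 by simp
  also have "\<dots> \<le> (m * Z) * (m * Y)"
    using vnorm2_lincomb_le[of "cnj z0" a "cnj z1" b] vnorm2_lincomb_le[of y0 a y1 b]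
      gram_eig_max_nonneg[of a b] vnorm2_nonneg[of ?v]
    unfolding m_def Z_def Y_def by (intro mult_mono) simp_all
  finally have "Z * Z \<le> Z * (m^2 * Y)"
    by (simp add: power2_eq_square algebra_simps)
  hence "Z \<le> m^2 * Y"
    using Z0 Y0 by (cases "Z = 0") simp_all
  thus ?thesis unfolding Z_def Y_def z0_def z1_def m_def .
qed

lemma sym_2x2_apply_norm2:
  fixes w0 w1 w2 y0 y1 :: complex
  shows "(cmod (w0 * y0 + w1 * y1))^2 + (cmod (w1 * y0 + w2 * y1))^2
    = ((cmod w0)^2 + (cmod w1)^2) * (cmod y0)^2 + ((cmod w1)^2 + (cmod w2)^2) * (cmod y1)^2
      + 2 * Re (cnj y0 * (cnj w0 * w1 + cnj w1 * w2) * y1)"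
proof -
  let ?w = "cnj y0 * (cnj w0 * w1 + cnj w1 * w2) * y1"
  have "complex_of_real ((cmod (w0 * y0 + w1 * y1))^2 + (cmod (w1 * y0 + w2 * y1))^2)
      = complex_of_real (((cmod w0)^2 + (cmod w1)^2) * (cmod y0)^2
          + ((cmod w1)^2 + (cmod w2)^2) * (cmod y1)^2) + (?w + cnj ?w)"
    by (simp add: of_real_cmod_power2; Groebner_Basis.algebra)
  also have "?w + cnj ?w = complex_of_real (2 * Re ?w)"
    by (rule complex_add_cnj)
  finally show ?thesis
    by (simp only: of_real_add[symmetric] of_real_eq_iff)
qed

lemma sym_2x2_det_norm2:
  fixes w0 w1 w2 :: complex
  shows "((cmod w0)^2 + (cmod w1)^2) * ((cmod w1)^2 + (cmod w2)^2) - (cmod (cnj w0 * w1 + cnj w1 * w2))^2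
    = (cmod (w0 * w2 - w1^2))^2"
proof -
  have "complex_of_real (((cmod w0)^2 + (cmod w1)^2) * ((cmod w1)^2 + (cmod w2)^2)
        - (cmod (cnj w0 * w1 + cnj w1 * w2))^2)
      = complex_of_real ((cmod (w0 * w2 - w1^2))^2)"
    by (simp add: of_real_cmod_power2; Groebner_Basis.algebra)
  thus ?thesis by (simp only: of_real_eq_iff)
qed

lemma hermitian_form_2x2_nonneg:
  fixes p r :: real and g :: complex
  assumes form: "\<And>y0 y1. 2 * Re (cnj y0 * g * y1) \<le> p * (cmod y0)^2 + r * (cmod y1)^2"
  shows "p \<ge> 0" "r \<ge> 0" "(cmod g)^2 \<le> p * r"
proof -
  show p0: "p \<ge> 0" using form[of 1 0] by simp
  show r0: "r \<ge> 0" using form[of 0 1] by simp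
  have quad: "2 * t * (cmod g)^2 \<le> p * (cmod g)^2 + r * t^2" for t :: real
    using form[of g "complex_of_real t"]
    by (simp add: complex_norm_square[symmetric] mult.commute)
  show "(cmod g)^2 \<le> p * r"
  proof (cases "p = 0")
    case True
    show ?thesis
    proof (rule ccontr)
      assume "\<not> ?thesis"
      hence g: "(cmod g)^2 > 0" using True by simp
      define t where "t = (cmod g)^2 / (r + 1)"
      have "t > 0" "r * t < (cmod g)^2"
        unfolding t_def using g r0 by (simp_all add: field_simps)
      hence "r * t^2 < 2 * t * (cmod g)^2"
        using g by (simp add: power2_eq_square)
      thus False using quad[of t] True by simp
    qed
  next
    case False
    hence "p > 0" using p0 by simp
    moreover have "p * (p * r - (cmod g)^2) \<ge> 0"
      using quad[of p] by (simp add: algebra_simps power2_eq_square)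
    ultimately show ?thesis by (simp add: zero_le_mult_iff)
  qed
qed

text \<open>If M is at least the larger root of x^2 - T x + D^2, then M \<ge> T - 2 D.\<close>

lemma diff_double_le_of_quadratic:
  fixes M T D :: real
  assumes "M^2 - M * T + D^2 \<ge> 0" "T \<le> 2 * M" "2 * D \<le> T" "D \<ge> 0"
  shows "T - 2 * D \<le> M"
proof (rule ccontr)
  assume "\<not> ?thesis"
  hence lt: "M < T - 2 * D" by simp
  hence "(M - (T - 2 * D)) * (M - 2 * D) < 0"
    using assms(2,4) by (intro mult_neg_pos) simp_all
  moreover have "(M - (T - 2 * D)) * (M - 2 * D) = (M^2 - M * T + D^2) - D * (5 * D - 2 * T)"
    by (simp add: algebra_simps power2_eq_square)
  moreover have "D * (5 * D - 2 * T) \<le> 0"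
    using lt assms(2,4) by (simp add: mult_nonneg_nonpos)
  ultimately show False using assms(1) by simp
qed

text \<open>By the operator-norm bound, M I - W^* W is positive semidefinite for
  M = (gram_eig_max a b)^2, so M dominates the larger eigenvalue of W^* W.\<close>

lemma concurrence_rank2_state_le: "(concurrence (rank2_state a b))^2 \<le> (gram_eig_max a b)^2"
proof -
  define w0 w1 w2 where "w0 = flip_form a a" and "w1 = flip_form a b" and "w2 = flip_form b b"
  define G00 G11 G01 where "G00 = (cmod w0)^2 + (cmod w1)^2" and "G11 = (cmod w1)^2 + (cmod w2)^2"
    and "G01 = cnj w0 * w1 + cnj w1 * w2"
  define M where "M = (gram_eig_max a b)^2"
  have T: "flip_frob a b = G00 + G11"
    unfolding flip_frob_def G00_def G11_def w0_def w1_def w2_def by simp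
  have D: "(flip_det a b)^2 = G00 * G11 - (cmod G01)^2"
    unfolding flip_det_def G00_def G11_def G01_def w0_def w1_def w2_def sym_2x2_det_norm2 ..
  have "2 * Re (cnj y0 * G01 * y1) \<le> (M - G00) * (cmod y0)^2 + (M - G11) * (cmod y1)^2" for y0 y1
    using flip_mat_apply_le[of a y0 b y1] sym_2x2_apply_norm2[of w0 y0 w1 y1 w2]
    unfolding M_def G00_def G11_def G01_def w0_def w1_def w2_def by (simp add: algebra_simps)
  note psd = hermitian_form_2x2_nonneg[OF this]
  have "M^2 - M * flip_frob a b + (flip_det a b)^2 \<ge> 0"
    using psd(3) unfolding T D by (simp add: algebra_simps power2_eq_square)
  moreover have "flip_frob a b \<le> 2 * M"
    using psd(1,2) unfolding T by simp
  ultimately have "flip_frob a b - 2 * flip_det a b \<le> M"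
    using flip_det_le_flip_frob[of a b]
    by (intro diff_double_le_of_quadratic) (simp_all add: flip_det_def)
  thus ?thesis unfolding concurrence_rank2_state M_def .
qed

lemma gram_det_eig_max_le:
  assumes "vnorm2 a + vnorm2 b = 1"
  shows "4 * gram_det a b + (gram_eig_max a b)^2 \<le> 4/3"
proof -
  define e s where "e = gram_det a b"
    and "s = sqrt ((vnorm2 a - vnorm2 b)^2 + 4 * (cmod (vinner a b))^2)"
  have "(vnorm2 a - vnorm2 b)^2 + 4 * (cmod (vinner a b))^2 = (vnorm2 a + vnorm2 b)^2 - 4 * e"
    unfolding e_def gram_det_def by (simp add: algebra_simps power2_eq_square)
  hence s2: "s^2 = 1 - 4 * e"
    unfolding s_def assms by (metis real_sqrt_pow2 power_one add_nonneg_nonneg zero_le_power2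
        mult_nonneg_nonneg zero_le_numeral)
  have top: "gram_eig_max a b = (1 + s) / 2"
    unfolding gram_eig_max_def s_def assms ..
  have "4 * e + (gram_eig_max a b)^2 = 1 - s^2 + ((1 + s) / 2)^2"
    unfolding top s2 by simp
  also have "\<dots> = 4/3 - (3 * s - 1)^2 / 12"
    by (simp add: power2_eq_square field_simps)
  finally show ?thesis unfolding e_def by simp
qed

section \<open>The steering function of a two-qubit state\<close>

lemma pauli_entries:
  "pauli 1 $$ (0,0) = 0" "pauli 1 $$ (0,1) = 1" "pauli 1 $$ (1,0) = 1" "pauli 1 $$ (1,1) = 0"
  "pauli 2 $$ (0,0) = 0" "pauli 2 $$ (0,1) = -\<i>" "pauli 2 $$ (1,0) = \<i>" "pauli 2 $$ (1,1) = 0"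
  "pauli 3 $$ (0,0) = 1" "pauli 3 $$ (0,1) = 0" "pauli 3 $$ (1,0) = 0" "pauli 3 $$ (1,1) = -1"
  by (simp_all add: pauli_def mat_of_rows_list_def)

lemma tcorr_entries:
  assumes "rho \<in> carrier_mat 4 4"
  shows "tcorr rho k l = Re (\<Sum>i<4. \<Sum>j<4. rho $$ (i,j) * kron2 (pauli k) (pauli l) $$ (j,i))"
  using assms unfolding tcorr_def
  by (auto simp: kron2_def scalar_prod_def intro!: arg_cong[where f=Re] sum.cong)

definition reduce_first :: "complex mat \<Rightarrow> complex mat" where
  "reduce_first rho = mat 2 2 (\<lambda>(i,j). rho $$ (2*i, 2*j) + rho $$ (2*i+1, 2*j+1))"

definition reduce_second :: "complex mat \<Rightarrow> complex mat" where
  "reduce_second rho = mat 2 2 (\<lambda>(i,j). rho $$ (i, j) + rho $$ (i+2, j+2))"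

text \<open>Completeness of the Pauli basis: the sum of all 16 squared correlations is 4 Tr rho^2;
  the terms involving the identity are (Tr rho)^2 and the squared lengths of the local Bloch
  vectors, which are (Tr rho)^2 - 4 det of the respective reduced state.\<close>

lemma Ssteer_hermitian:
  assumes rho: "rho \<in> carrier_mat 4 4"
    and herm: "\<And>i j. i < 4 \<Longrightarrow> j < 4 \<Longrightarrow> rho $$ (j,i) = cnj (rho $$ (i,j))"
  shows "Ssteer rho = 4 * (\<Sum>i<4. \<Sum>j<4. (cmod (rho $$ (i,j)))^2) - 3 * (\<Sum>i<4. Re (rho $$ (i,i)))^2
     + 4 * Re (det (reduce_first rho)) + 4 * Re (det (reduce_second rho))"
proof -
  have lower: "rho $$ (j,i) = cnj (rho $$ (i,j))" if "i < j" "j < 4" for i j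
    using herm[of i j] that by simp
  have diag: "Im (rho $$ (i,i)) = 0" if "i < 4" for i
    using herm[OF that that] by (metis Reals_cnj_iff complex_is_Real_iff)
  have "reduce_first rho \<in> carrier_mat 2 2" "reduce_second rho \<in> carrier_mat 2 2"
    by (simp_all add: reduce_first_def reduce_second_def)
  note dets = det_2x2[OF this(1)] det_2x2[OF this(2)]
  show ?thesis
    unfolding Ssteer_def sum_1_3 tcorr_entries[OF rho] dets
    by (simp add: sum_lessThan_4 kron2_def pauli_entries[simplified]
        reduce_first_def reduce_second_def cmod_power2_Re_Im lower diag)
      (simp only: One_nat_def[symmetric] Suc_1 Suc_numeral add_num_simps, Groebner_Basis.algebra)
qed

lemma rank2_state_carrier: "rank2_state a b \<in> carrier_mat 4 4"
  by (simp add: rank2_state_def)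

lemma rank2_state_hermitian:
  "i < 4 \<Longrightarrow> j < 4 \<Longrightarrow> rank2_state a b $$ (j,i) = cnj (rank2_state a b $$ (i,j))"
  by (simp add: rank2_state_def)

lemma rank2_state_trace: "(\<Sum>i<4. Re (rank2_state a b $$ (i,i))) = vnorm2 a + vnorm2 b"
  by (simp add: rank2_state_def vnorm2_def sum_lessThan_4 complex_mult_cnj cmod_power2_Re_Im)

lemma rank2_state_purity:
  "(\<Sum>i<4. \<Sum>j<4. (cmod (rank2_state a b $$ (i,j)))^2) = (vnorm2 a + vnorm2 b)^2 - 2 * gram_det a b"
proof -
  have "complex_of_real (\<Sum>i<4. \<Sum>j<4. (cmod (rank2_state a b $$ (i,j)))^2)
      = complex_of_real ((vnorm2 a + vnorm2 b)^2 - 2 * gram_det a b)"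
    unfolding rank2_state_def gram_det_def vnorm2_def vinner_def
    by (simp add: sum_lessThan_4 of_real_cmod_power2; Groebner_Basis.algebra)
  thus ?thesis by (simp only: of_real_eq_iff)
qed

lemma Ssteer_rank2_state:
  "Ssteer (rank2_state a b) = (vnorm2 a + vnorm2 b)^2 - 8 * gram_det a b
     + 4 * Re (det (reduce_first (rank2_state a b))) + 4 * Re (det (reduce_second (rank2_state a b)))"
proof -
  have "Ssteer (rank2_state a b) = 4 * (\<Sum>i<4. \<Sum>j<4. (cmod (rank2_state a b $$ (i,j)))^2)
      - 3 * (\<Sum>i<4. Re (rank2_state a b $$ (i,i)))^2
      + 4 * Re (det (reduce_first (rank2_state a b))) + 4 * Re (det (reduce_second (rank2_state a b)))"
    by (rule Ssteer_hermitian[OF rank2_state_carrier rank2_state_hermitian])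
  thus ?thesis unfolding rank2_state_trace rank2_state_purity by simp
qed

definition gram_mat :: "(nat \<Rightarrow> complex) \<Rightarrow> (nat \<Rightarrow> complex) \<Rightarrow> complex mat" where
  "gram_mat a b = mat 2 2 (\<lambda>(i,j). vinner (if j = 0 then a else b) (if i = 0 then a else b))"

lemma det_gram_mat: "det (gram_mat a b) = complex_of_real (gram_det a b)"
proof -
  have "gram_mat a b \<in> carrier_mat 2 2" by (simp add: gram_mat_def)
  thus ?thesis
    by (simp add: det_2x2 gram_mat_def gram_det_def vnorm2_def vinner_def sum_lessThan_4
        of_real_cmod_power2; Groebner_Basis.algebra)
qed

section \<open>Pure three-qubit states\<close>

text \<open>The amplitude psi $ (4a + 2b + c) belongs to A = a, B = b, C = c.  Fixing one qubit
  leaves a 4-vector indexed like a two-qubit state of the other two.\<close>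

definition slice_A :: "complex vec \<Rightarrow> nat \<Rightarrow> nat \<Rightarrow> complex" where
  "slice_A psi a = (\<lambda>i. psi $ (4 * a + i))"

definition slice_B :: "complex vec \<Rightarrow> nat \<Rightarrow> nat \<Rightarrow> complex" where
  "slice_B psi b = (\<lambda>i. psi $ (4 * (i div 2) + 2 * b + i mod 2))"

definition slice_C :: "complex vec \<Rightarrow> nat \<Rightarrow> nat \<Rightarrow> complex" where
  "slice_C psi c = (\<lambda>i. psi $ (2 * i + c))"

lemmas slice_defs = slice_A_def slice_B_def slice_C_def

lemma rho_AB_rank2_state: "rho_AB psi = rank2_state (slice_C psi 0) (slice_C psi 1)"
  by (rule eq_matI) (auto simp: rho_AB_def rank2_state_def slice_C_def sum_lessThan_2)

lemma rho_AC_rank2_state: "rho_AC psi = rank2_state (slice_B psi 0) (slice_B psi 1)"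
  by (rule eq_matI) (auto simp: rho_AC_def rank2_state_def slice_B_def sum_lessThan_2)

lemma rho_BC_rank2_state: "rho_BC psi = rank2_state (slice_A psi 0) (slice_A psi 1)"
  by (rule eq_matI) (auto simp: rho_BC_def rank2_state_def slice_A_def sum_lessThan_2)

lemma reduce_rank2_state_slices:
  "reduce_first (rank2_state (slice_C psi 0) (slice_C psi 1)) = gram_mat (slice_A psi 0) (slice_A psi 1)"
  "reduce_second (rank2_state (slice_C psi 0) (slice_C psi 1)) = gram_mat (slice_B psi 0) (slice_B psi 1)"
  "reduce_first (rank2_state (slice_B psi 0) (slice_B psi 1)) = gram_mat (slice_A psi 0) (slice_A psi 1)"
  "reduce_second (rank2_state (slice_B psi 0) (slice_B psi 1)) = gram_mat (slice_C psi 0) (slice_C psi 1)"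
  "reduce_first (rank2_state (slice_A psi 0) (slice_A psi 1)) = gram_mat (slice_B psi 0) (slice_B psi 1)"
  "reduce_second (rank2_state (slice_A psi 0) (slice_A psi 1)) = gram_mat (slice_C psi 0) (slice_C psi 1)"
  by (rule eq_matI; auto simp: reduce_first_def reduce_second_def rank2_state_def gram_mat_def
      vinner_def slice_defs sum_lessThan_4 less_2_cases;
      simp only: One_nat_def[symmetric] Suc_1 Suc_numeral add_num_simps; simp add: algebra_simps)+

lemma vnorm2_slices:
  "(\<Sum>i<8. (cmod (psi $ i))^2) = vnorm2 (slice_A psi 0) + vnorm2 (slice_A psi 1)"
  "(\<Sum>i<8. (cmod (psi $ i))^2) = vnorm2 (slice_B psi 0) + vnorm2 (slice_B psi 1)"
  "(\<Sum>i<8. (cmod (psi $ i))^2) = vnorm2 (slice_C psi 0) + vnorm2 (slice_C psi 1)"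
  by (simp add: vnorm2_def slice_defs sum_lessThan_4 sum_lessThan_8;
      (simp only: One_nat_def[symmetric] Suc_1 Suc_numeral add_num_simps)?; simp add: algebra_simps)+

text \<open>The Coffman-Kundu-Wootters equalities: the flip norms of the two reduced states
  containing a qubit add up to four times the determinant of its one-qubit reduced state.\<close>

lemma flip_frob_slices_sum:
  "flip_frob (slice_C psi 0) (slice_C psi 1) + flip_frob (slice_B psi 0) (slice_B psi 1)
     = 4 * gram_det (slice_A psi 0) (slice_A psi 1)"
  "flip_frob (slice_C psi 0) (slice_C psi 1) + flip_frob (slice_A psi 0) (slice_A psi 1)
     = 4 * gram_det (slice_B psi 0) (slice_B psi 1)"
  "flip_frob (slice_B psi 0) (slice_B psi 1) + flip_frob (slice_A psi 0) (slice_A psi 1)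
     = 4 * gram_det (slice_C psi 0) (slice_C psi 1)"
  by (subst of_real_eq_iff[where 'a=complex, symmetric],
      simp add: flip_frob_def gram_det_def vnorm2_def vinner_def flip_form_def slice_defs
        sum_lessThan_4 of_real_cmod_power2,
      (simp only: One_nat_def[symmetric] Suc_1 Suc_numeral add_num_simps)?,
      Groebner_Basis.algebra)+

text \<open>The three-tangle does not depend on the bipartition it is computed from.\<close>

lemma flip_det_slices:
  "flip_det (slice_C psi 0) (slice_C psi 1) = flip_det (slice_A psi 0) (slice_A psi 1)"
  "flip_det (slice_B psi 0) (slice_B psi 1) = flip_det (slice_A psi 0) (slice_A psi 1)"
  unfolding flip_det_def
  by (rule arg_cong[where f = cmod], simp add: flip_form_def slice_defs,
      (simp only: One_nat_def[symmetric] Suc_1 Suc_numeral add_num_simps)?,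
      Groebner_Basis.algebra)+

lemma concurrence_rho_AB: "(concurrence (rho_AB psi))^2
    = flip_frob (slice_C psi 0) (slice_C psi 1) - 2 * flip_det (slice_A psi 0) (slice_A psi 1)"
  unfolding rho_AB_rank2_state concurrence_rank2_state flip_det_slices ..

lemma concurrence_rho_AC: "(concurrence (rho_AC psi))^2
    = flip_frob (slice_B psi 0) (slice_B psi 1) - 2 * flip_det (slice_A psi 0) (slice_A psi 1)"
  unfolding rho_AC_rank2_state concurrence_rank2_state flip_det_slices ..

lemma concurrence_rho_BC: "(concurrence (rho_BC psi))^2
    = flip_frob (slice_A psi 0) (slice_A psi 1) - 2 * flip_det (slice_A psi 0) (slice_A psi 1)"
  unfolding rho_BC_rank2_state concurrence_rank2_state ..

lemma Ssteer_gram_dets: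
  fixes psi :: "complex vec"
  defines "N \<equiv> (\<Sum>i<8. (cmod (psi $ i))^2)"
    and "dA \<equiv> gram_det (slice_A psi 0) (slice_A psi 1)"
    and "dB \<equiv> gram_det (slice_B psi 0) (slice_B psi 1)"
    and "dC \<equiv> gram_det (slice_C psi 0) (slice_C psi 1)"
  shows "Ssteer (rho_AB psi) = N^2 + 4 * dA + 4 * dB - 8 * dC"
    and "Ssteer (rho_AC psi) = N^2 + 4 * dA + 4 * dC - 8 * dB"
    and "Ssteer (rho_BC psi) = N^2 + 4 * dB + 4 * dC - 8 * dA"
  unfolding assms rho_AB_rank2_state rho_AC_rank2_state rho_BC_rank2_state Ssteer_rank2_state
    reduce_rank2_state_slices det_gram_mat
  by (simp_all only: vnorm2_slices(3)[symmetric] vnorm2_slices(2)[symmetric]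
      vnorm2_slices(1)[symmetric] Re_complex_of_real)

lemma Ssteer_concurrences:
  fixes psi :: "complex vec"
  defines "N \<equiv> (\<Sum>i<8. (cmod (psi $ i))^2)"
    and "x \<equiv> (concurrence (rho_AB psi))^2" and "y \<equiv> (concurrence (rho_AC psi))^2"
    and "z \<equiv> (concurrence (rho_BC psi))^2"
  shows "Ssteer (rho_AB psi) = N^2 + 2 * x - y - z"
    and "Ssteer (rho_AC psi) = N^2 + 2 * y - x - z"
    and "Ssteer (rho_BC psi) = N^2 + 2 * z - x - y"
proof -
  note ckw = flip_frob_slices_sum[of psi]
  note eqs = Ssteer_gram_dets concurrence_rho_AB concurrence_rho_AC concurrence_rho_BC
  show "Ssteer (rho_AB psi) = N^2 + 2 * x - y - z"
    unfolding assms eqs using ckw by Groebner_Basis.algebra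
  show "Ssteer (rho_AC psi) = N^2 + 2 * y - x - z"
    unfolding assms eqs using ckw by Groebner_Basis.algebra
  show "Ssteer (rho_BC psi) = N^2 + 2 * z - x - y"
    unfolding assms eqs using ckw by Groebner_Basis.algebra
qed

lemma concurrence_sum_le:
  assumes "pure3 psi"
  shows "(concurrence (rho_AB psi))^2 + (concurrence (rho_AC psi))^2 + (concurrence (rho_BC psi))^2
    \<le> 4/3"
proof -
  let ?a = "slice_A psi 0" and ?b = "slice_A psi 1"
  have "(concurrence (rho_AB psi))^2 + (concurrence (rho_AC psi))^2 \<le> 4 * gram_det ?a ?b"
    using flip_frob_slices_sum(1)[of psi] unfolding concurrence_rho_AB concurrence_rho_AC
    by (simp add: flip_det_def)
  moreover have "(concurrence (rho_BC psi))^2 \<le> (gram_eig_max ?a ?b)^2"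
    unfolding rho_BC_rank2_state by (rule concurrence_rank2_state_le)
  moreover have "vnorm2 ?a + vnorm2 ?b = 1"
    using assms vnorm2_slices(1)[of psi] by (simp add: pure3_def)
  ultimately show ?thesis
    using gram_det_eig_max_le by fastforce
qed

section \<open>Monogamy of steering\<close>

lemma card_filter_0_1_2:
  "card {k \<in> {0::nat, 1, 2}. P k} = of_bool (P 0) + of_bool (P 1) + of_bool (P 2)"
proof -
  have "card {k \<in> {0::nat, 1, 2}. P k} = (\<Sum>k\<in>{k \<in> {0::nat, 1, 2}. P k}. 1)"
    by (rule card_eq_sum)
  also have "\<dots> = (\<Sum>k\<in>{0::nat, 1, 2}. if P k then 1 else 0)"
    by (rule sum.inter_filter) simp
  finally show ?thesis by simp
qed

lemma at_most_one_dominant: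
  fixes x y z :: real
  assumes "x + y + z \<le> 4/3"
    and "2 \<le> of_bool (8/9 \<le> x + y) + of_bool (8/9 \<le> x + z) + (of_bool (8/9 \<le> y + z) :: nat)"
  shows "of_bool (x + y < 2 * z) + of_bool (x + z < 2 * y) + (of_bool (y + z < 2 * x) :: nat) \<le> 1"
  using assms unfolding of_bool_def by (auto split: if_splits)

theorem corollary4:
  fixes psi :: "complex vec"
  assumes "pure3 psi"
  and "let CAB = concurrence (rho_AB psi); CAC = concurrence (rho_AC psi);
           CBC = concurrence (rho_BC psi) in
         card {k \<in> {0::nat, 1, 2}.
           (k = 0 \<longrightarrow> CAB^2 + CAC^2 \<ge> 8/9) \<and>
           (k = 1 \<longrightarrow> CAB^2 + CBC^2 \<ge> 8/9) \<and>
           (k = 2 \<longrightarrow> CAC^2 + CBC^2 \<ge> 8/9)} \<ge> 2"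
  shows "card {k \<in> {0::nat, 1, 2}.
           (k = 0 \<longrightarrow> Ssteer (rho_BC psi) > 1) \<and>
           (k = 1 \<longrightarrow> Ssteer (rho_AC psi) > 1) \<and>
           (k = 2 \<longrightarrow> Ssteer (rho_AB psi) > 1)} \<le> 1"
proof -
  define x y z where "x = (concurrence (rho_AB psi))^2" and "y = (concurrence (rho_AC psi))^2"
    and "z = (concurrence (rho_BC psi))^2"
  have N: "(\<Sum>i<8. (cmod (psi $ i))^2) = 1"
    using assms(1) by (simp add: pure3_def)
  have "x + y + z \<le> 4/3"
    using concurrence_sum_le[OF assms(1)] unfolding x_def y_def z_def .
  moreover have "2 \<le> of_bool (8/9 \<le> x + y) + of_bool (8/9 \<le> x + z) + (of_bool (8/9 \<le> y + z) :: nat)"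
    using assms(2) unfolding Let_def card_filter_0_1_2 x_def y_def z_def by simp
  ultimately have "of_bool (x + y < 2 * z) + of_bool (x + z < 2 * y) + (of_bool (y + z < 2 * x) :: nat) \<le> 1"
    by (rule at_most_one_dominant)
  moreover have "Ssteer (rho_BC psi) > 1 \<longleftrightarrow> x + y < 2 * z"
    and "Ssteer (rho_AC psi) > 1 \<longleftrightarrow> x + z < 2 * y"
    and "Ssteer (rho_AB psi) > 1 \<longleftrightarrow> y + z < 2 * x"
    unfolding Ssteer_concurrences N x_def y_def z_def by auto
  ultimately show ?thesis
    unfolding card_filter_0_1_2 by simp
qed

end
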